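(* Let $n_j:=2^{2^j}$ and $t_n:=1/n$. For $j\ge100$, $f_{n_j}(t_{n_j})=0$ and $B_{n_j}(f_{n_j},t_{n_j})\ge\frac{\ln n_j}{16\,n_j}$.
   Context: Nodes: $x_{k,n}:=2k/n-1$, $k=0,\dots,n$. $B_n(f,x):=N_n(f,x)/D_n(x)$ for $x$ not a node, $B_n(f,x_{k,n}):=f(x_{k,n})$, with $N_n(f,x)=\sum_{k=0}^n(-1)^k\frac{f(x_{k,n})}{x-x_{k,n}}$, $D_n(x)=\sum_{k=0}^n(-1)^k\frac{1}{x-x_{k,n}}$. For $m$ such that $\sqrt m$ is an integer multiple of $4$, define $f_m:\mathbb{R}\to\mathbb{R}$ by: $f_m(x)=0$ for $x<1/m$ or $x\ge(\sqrt m-3)/m$; $f_m(x)=x-1/m$ for $1/m\le x<2/m$; $f_m(x)=\frac{4p+3}{m}-x$ for $0\le p\le\frac{\sqrt m-8}{4}$ and $\frac{4p+2}{m}\le x<\frac{4p+4}{m}$; $f_m(x)=x-\frac{4p+1}{m}$ for $1\le p\le\frac{\sqrt m-8}{4}$ and $\frac{4p}{m}\le x<\frac{4p+2}{m}$; $f_m(x)=x-\frac{\sqrt m-3}{m}$ for $\frac{\sqrt m-4}{m}\le x<\frac{\sqrt m-3}{m}$. *)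

theory Defs
  imports Complex_Main
begin

definition node :: "nat \<Rightarrow> nat \<Rightarrow> real" where
  "node n k = 2 * real k / real n - 1"

definition Nn :: "nat \<Rightarrow> (real \<Rightarrow> real) \<Rightarrow> real \<Rightarrow> real" where
  "Nn n f x = (\<Sum>k=0..n. (-1) ^ k * f (node n k) / (x - node n k))"

definition Dn :: "nat \<Rightarrow> real \<Rightarrow> real" where
  "Dn n x = (\<Sum>k=0..n. (-1) ^ k / (x - node n k))"

definition Bn :: "nat \<Rightarrow> (real \<Rightarrow> real) \<Rightarrow> real \<Rightarrow> real" where
  "Bn n f x = (if \<exists>k\<le>n. x = node n k then f x else Nn n f x / Dn n x)"

text \<open>The function f_m (intended for m with sqrt m an integer multiple of 4),
  transcribed piece by piece.\<close>
definition fm :: "nat \<Rightarrow> real \<Rightarrow> real" where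
  "fm m x = (let s = sqrt (real m); M = real m in
     if x < 1/M \<or> x \<ge> (s - 3)/M then 0
     else if 1/M \<le> x \<and> x < 2/M then x - 1/M
     else if \<exists>p::nat. real p \<le> (s - 8)/4 \<and> (4*real p + 2)/M \<le> x \<and> x < (4*real p + 4)/M
       then (4 * real (SOME p::nat. real p \<le> (s - 8)/4 \<and> (4*real p + 2)/M \<le> x \<and> x < (4*real p + 4)/M) + 3)/M - x
     else if \<exists>p::nat. 1 \<le> p \<and> real p \<le> (s - 8)/4 \<and> (4*real p)/M \<le> x \<and> x < (4*real p + 2)/M
       then x - (4 * real (SOME p::nat. 1 \<le> p \<and> real p \<le> (s - 8)/4 \<and> (4*real p)/M \<le> x \<and> x < (4*real p + 2)/M) + 1)/M
     else if (s - 4)/M \<le> x \<and> x < (s - 3)/M then x - (s - 3)/M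
     else 0)"

end

theory Submission
  imports Defs "HOL-Analysis.Harmonic_Numbers"
begin

(* With h = n/2, the point 1/n lies halfway between nodes: 1/n - x_k = (1 - 2(k - h))/n.
   On the grid 2d/n the function f_n equals +1/n for odd d and -1/n for even d when
   1 <= d <= sqrt n/2 - 2, and vanishes otherwise; its sign exactly cancels (-1)^k, so
   N_n(f_n, 1/n) is the sum of the odd reciprocals 1/(2e - 1), e <= sqrt n/2 - 2, which is
   at least half a logarithm.  D_n(1/n) is n times two partial sums of the Leibniz series
   sum (-1)^l/(2l + 1), hence lies in (0, 2n].  Since (sqrt n/2 - 1)^2 >= sqrt n, the
   quotient is at least ln n/(16 n). *)

lemma alternating_sum_bounds:
  fixes a :: "nat \<Rightarrow> real"
  assumes antimono: "\<And>i. a (Suc i) \<le> a i" and nonneg: "\<And>i. 0 \<le> a i"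
  shows "0 \<le> (\<Sum>i<2*m. (-1)^i * a i) \<and> (\<Sum>i<Suc (2*m). (-1)^i * a i) \<le> a 0"
proof (induction m)
  case 0
  show ?case using nonneg by simp
next
  case (Suc m)
  have "(\<Sum>i<2 * Suc m. (-1)^i * a i) = (\<Sum>i<2*m. (-1)^i * a i) + (a (2*m) - a (Suc (2*m)))"
    by simp
  moreover have "(\<Sum>i<Suc (2 * Suc m). (-1)^i * a i)
      = (\<Sum>i<Suc (2*m). (-1)^i * a i) - (a (Suc (2*m)) - a (Suc (Suc (2*m))))"
    by simp
  ultimately show ?case using Suc antimono[of "2*m"] antimono[of "Suc (2*m)"] by linarith
qed

lemma reciprocal_minus_node:
  assumes "n = 2 * h" "0 < n"
  shows "1 / real n - node n k = (1 - 2 * (real k - real h)) / real n"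
  using assms by (simp add: node_def field_simps)

lemma one_minus_twice_diff_neq_zero: "1 - 2 * (real k - real h) \<noteq> 0"
proof
  assume "1 - 2 * (real k - real h) = 0"
  then have "real (2 * k) = real (2 * h + 1)" by simp
  then have "2 * k = 2 * h + 1" by (simp only: of_nat_eq_iff)
  then show False by presburger
qed

lemma Dn_reciprocal_bounds:
  assumes "4 dvd n" "0 < n"
  shows "0 < Dn n (1 / real n) \<and> Dn n (1 / real n) \<le> 2 * real n"
proof -
  obtain m where m: "n = 4 * m" using assms(1) by blast
  define h where "h = 2 * m"
  have n: "n = 2 * h" unfolding h_def m by simp
  have even_h: "even h" unfolding h_def by simp
  define a where "a i = 1 / (2 * real i + 1)" for i
  define S where "S l = (\<Sum>i<l. (-1)^i * a i)" for l
  define g where "g k = (-1::real)^k / (1 - 2 * (real k - real h))" for k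
  have "Dn n (1 / real n) = real n * (\<Sum>k=0..n. g k)"
    unfolding Dn_def sum_distrib_left
    by (intro sum.cong) (use assms(2) in \<open>simp_all add: reciprocal_minus_node[OF n] g_def\<close>)
  (* Reflecting the lower half about h and shifting the upper half past h turns both halves
     into Leibniz partial sums; 4 dvd n makes h even, so that the signs agree. *)
  also have "(\<Sum>k=0..n. g k) = (\<Sum>k=0..h. g k) + (\<Sum>k=h+1..h+h. g k)"
    unfolding n mult_2 by (rule sum.ub_add_nat) simp
  also have "(\<Sum>k=0..h. g k) = (\<Sum>i=0..h. g (h - i))"
    using sum.atLeastAtMost_rev[of g 0 h] by simp
  also have "\<dots> = S (Suc h)"
    unfolding S_def lessThan_Suc_atMost atLeast0AtMost[symmetric]
  proof (intro sum.cong)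
    fix i assume "i \<in> {0..h}"
    with even_h have "(-1::real)^(h - i) = (-1)^i"
      by (simp add: minus_one_power_iff le_imp_diff_is_add)
    then show "g (h - i) = (-1)^i * a i"
      using \<open>i \<in> {0..h}\<close> by (simp add: g_def a_def of_nat_diff)
  qed simp
  also have "(\<Sum>k=h+1..h+h. g k) = (\<Sum>i=1..h. g (i + h))"
    using sum.shift_bounds_cl_nat_ivl[of g 1 h h] by (simp add: add.commute)
  also have "\<dots> = (\<Sum>l<h. g (Suc l + h))"
    using sum.atLeast1_atMost_eq[of "\<lambda>i. g (i + h)" h] by simp
  also have "\<dots> = S h"
    using even_h unfolding S_def by (intro sum.cong) (simp_all add: g_def a_def power_add field_simps)
  finally have D: "Dn n (1 / real n) = real n * (S (Suc h) + S h)" .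
  have "0 \<le> S h" "S (Suc h) \<le> 1"
    using alternating_sum_bounds[of a m] unfolding S_def a_def h_def by (auto simp: frac_le)
  moreover have "S (Suc h) = S h + a h" "0 < a h"
    unfolding S_def a_def h_def by simp_all
  ultimately show ?thesis unfolding D using assms(2) by simp
qed

lemma fm_scaled:
  assumes "0 < m"
  defines "s \<equiv> sqrt (real m)"
  shows "fm m (y / real m) =
    (if y < 1 \<or> s - 3 \<le> y then 0
     else if 1 \<le> y \<and> y < 2 then y / real m - 1 / real m
     else if \<exists>p::nat. real p \<le> (s - 8)/4 \<and> 4*real p + 2 \<le> y \<and> y < 4*real p + 4
       then (4 * real (SOME p::nat. real p \<le> (s - 8)/4 \<and> 4*real p + 2 \<le> y \<and> y < 4*real p + 4)
             + 3) / real m - y / real m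
     else if \<exists>p::nat. 1 \<le> p \<and> real p \<le> (s - 8)/4 \<and> 4*real p \<le> y \<and> y < 4*real p + 2
       then y / real m - (4 * real (SOME p::nat. 1 \<le> p \<and> real p \<le> (s - 8)/4 \<and> 4*real p \<le> y
             \<and> y < 4*real p + 2) + 1) / real m
     else if s - 4 \<le> y \<and> y < s - 3 then y / real m - (s - 3) / real m
     else 0)"
proof -
  have M: "0 < real m" using assms(1) by simp
  have le: "a / real m \<le> y / real m \<longleftrightarrow> a \<le> y" and less: "y / real m < a / real m \<longleftrightarrow> y < a"
    for a using M by (simp_all add: divide_le_cancel divide_less_cancel)
  show ?thesis
    unfolding fm_def Let_def s_def[symmetric] by (simp only: le less)
qed

lemma fm_reciprocal:
  assumes "4 < sqrt (real m)"
  shows "fm m (1 / real m) = 0"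
proof -
  have "0 < m" using assms by (cases m) simp_all
  then show ?thesis using fm_scaled[of m 1] assms by simp
qed

lemma fm_outside:
  assumes "0 < m" "y < 1 \<or> sqrt (real m) - 3 \<le> y"
  shows "fm m (y / real m) = 0"
  using fm_scaled[OF assms(1)] assms(2) by simp

lemma fm_peak:
  fixes p :: nat
  assumes m: "0 < m" and p: "real p \<le> (sqrt (real m) - 8) / 4"
  shows "fm m ((4 * real p + 2) / real m) = 1 / real m"
proof -
  let ?y = "4 * real p + 2"
  let ?P = "\<lambda>p'::nat. real p' \<le> (sqrt (real m) - 8)/4 \<and> 4 * real p' + 2 \<le> ?y \<and> ?y < 4 * real p' + 4"
  have inside: "\<not> (?y < 1 \<or> sqrt (real m) - 3 \<le> ?y)" "\<not> (1 \<le> ?y \<and> ?y < 2)"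
    using p by simp_all
  have peak: "?P p" using p by simp
  have "(SOME p'. ?P p') = p"
  proof (rule some_equality)
    fix p' assume "?P p'"
    then have "p' \<le> p" "p < Suc p'" by (simp_all flip: of_nat_le_iff of_nat_less_iff)
    then show "p' = p" by simp
  qed (fact peak)
  then have "fm m (?y / real m) = (4 * real p + 3) / real m - ?y / real m"
    unfolding fm_scaled[OF m] using inside peak by (simp only: if_not_P if_P exI if_False)
  then show ?thesis using m by (simp add: diff_divide_distrib[symmetric])
qed

lemma fm_trough:
  fixes p :: nat
  assumes m: "0 < m" and p: "1 \<le> p" "real p \<le> (sqrt (real m) - 8) / 4"
  shows "fm m (4 * real p / real m) = - 1 / real m"
proof -
  let ?y = "4 * real p"
  let ?P = "\<lambda>p'::nat. 1 \<le> p' \<and> real p' \<le> (sqrt (real m) - 8)/4 \<and> 4 * real p' \<le> ?y \<and> ?y < 4 * real p' + 2"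
  have inside: "\<not> (?y < 1 \<or> sqrt (real m) - 3 \<le> ?y)" "\<not> (1 \<le> ?y \<and> ?y < 2)"
    using p by simp_all
  have no_peak: "\<not> (\<exists>p'::nat. real p' \<le> (sqrt (real m) - 8)/4 \<and> 4 * real p' + 2 \<le> ?y \<and> ?y < 4 * real p' + 4)"
  proof
    assume "\<exists>p'::nat. real p' \<le> (sqrt (real m) - 8)/4 \<and> 4 * real p' + 2 \<le> ?y \<and> ?y < 4 * real p' + 4"
    then obtain p' :: nat where "4 * real p' + 2 \<le> ?y" "?y < 4 * real p' + 4" by blast
    then have "p' < p" "p < Suc p'" by (simp_all flip: of_nat_less_iff)
    then show False by simp
  qed
  have trough: "?P p" using p by simp
  have "(SOME p'. ?P p') = p"
  proof (rule some_equality)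
    fix p' assume "?P p'"
    then have "p' \<le> p" "p < Suc p'" by (simp_all flip: of_nat_le_iff of_nat_less_iff)
    then show "p' = p" by simp
  qed (fact trough)
  then have "fm m (?y / real m) = ?y / real m - (4 * real p + 1) / real m"
    unfolding fm_scaled[OF m] using inside no_peak trough by (simp only: if_not_P if_P exI if_False)
  then show ?thesis using m by (simp add: diff_divide_distrib[symmetric])
qed

lemma fm_last_trough:
  assumes m: "0 < m" and s: "6 \<le> sqrt (real m)"
  shows "fm m ((sqrt (real m) - 4) / real m) = - 1 / real m"
proof -
  let ?s = "sqrt (real m)"
  let ?y = "?s - 4"
  have inside: "\<not> (?y < 1 \<or> ?s - 3 \<le> ?y)" "\<not> (1 \<le> ?y \<and> ?y < 2)"
    using s by simp_all
  have no_peak: "\<not> (\<exists>p::nat. real p \<le> (?s - 8)/4 \<and> 4 * real p + 2 \<le> ?y \<and> ?y < 4 * real p + 4)"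
    by auto
  have no_trough: "\<not> (\<exists>p::nat. 1 \<le> p \<and> real p \<le> (?s - 8)/4 \<and> 4 * real p \<le> ?y \<and> ?y < 4 * real p + 2)"
    by auto
  have last: "?s - 4 \<le> ?y \<and> ?y < ?s - 3" by simp
  have "fm m (?y / real m) = ?y / real m - (?s - 3) / real m"
    unfolding fm_scaled[OF m] using inside no_peak no_trough last by (simp only: if_not_P if_P if_False)
  then show ?thesis using m by (simp add: diff_divide_distrib[symmetric])
qed

lemma fm_even_grid:
  fixes s :: nat and d :: int
  assumes "4 dvd s" "8 \<le> s"
  shows "fm (s * s) (2 * of_int d / real (s * s)) =
    (if 1 \<le> d \<and> d \<le> int s div 2 - 2 then (if odd d then 1 else - 1) / real (s * s) else 0)"
proof -
  obtain q where q: "s = 4 * q" using assms(1) by blast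
  have m: "0 < s * s" using assms(2) by simp
  have "sqrt (real (s * s)) = real s" by simp
  then have sqrt_m: "sqrt (real (s * s)) = 4 * real q" unfolding q by simp
  have bound: "int s div 2 - 2 = 2 * int q - 2" unfolding q by simp
  consider (outside) "d \<le> 0 \<or> 2 * int q - 1 \<le> d"
    | (odd) p :: nat where "d = 2 * int p + 1" "p + 2 \<le> q"
    | (even) p :: nat where "d = 2 * int p" "1 \<le> p" "p + 1 \<le> q"
  proof (cases "d \<le> 0 \<or> 2 * int q - 1 \<le> d")
    case False
    then have d: "1 \<le> d" "d \<le> 2 * int q - 2" by simp_all
    define p where "p = nat (d div 2)"
    have p: "int p = d div 2" unfolding p_def using d by simp
    show thesis
    proof (cases "odd d")
      case True
      then have "d = 2 * int p + 1" unfolding p by presburger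
      moreover from this have "p + 2 \<le> q" using d True by presburger
      ultimately show thesis by (rule odd)
    next
      case False
      then have "d = 2 * int p" unfolding p by presburger
      moreover from this have "1 \<le> p" "p + 1 \<le> q" using d by linarith+
      ultimately show thesis by (rule even)
    qed
  qed simp
  then show ?thesis
  proof cases
    case outside
    then have "real_of_int d \<le> real_of_int 0 \<or> real_of_int (2 * int q - 1) \<le> real_of_int d"
      by (simp only: of_int_le_iff)
    then have "2 * real_of_int d < 1 \<or> sqrt (real (s * s)) - 3 \<le> 2 * real_of_int d"
      unfolding sqrt_m by auto
    then show ?thesis using fm_outside[OF m] outside bound by auto
  next
    case (odd p)
    have "real p \<le> (sqrt (real (s * s)) - 8) / 4"
      using odd(2) unfolding sqrt_m by (simp flip: of_nat_le_iff)
    then have "fm (s * s) ((4 * real p + 2) / real (s * s)) = 1 / real (s * s)"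
      by (rule fm_peak[OF m])
    then show ?thesis using odd bound by (simp add: algebra_simps)
  next
    case (even p)
    show ?thesis
    proof (cases "p + 2 \<le> q")
      case True
      then have "real p \<le> (sqrt (real (s * s)) - 8) / 4"
        unfolding sqrt_m by (simp flip: of_nat_le_iff)
      then have "fm (s * s) (4 * real p / real (s * s)) = - 1 / real (s * s)"
        by (rule fm_trough[OF m even(2)])
      then show ?thesis using even bound by (simp add: algebra_simps)
    next
      case False
      then have "2 * real_of_int d = sqrt (real (s * s)) - 4"
        using even unfolding sqrt_m by simp
      moreover have "6 \<le> sqrt (real (s * s))" using assms(2) q unfolding sqrt_m by simp
      ultimately show ?thesis using fm_last_trough[OF m] even bound False by auto
    qed
  qed
qed

lemma Nn_fm_reciprocal:
  assumes "4 dvd s" "8 \<le> s"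
  shows "Nn (s * s) (fm (s * s)) (1 / real (s * s)) = (\<Sum>e=1..s div 2 - 2. 1 / (2 * real e - 1))"
proof -
  define n where "n = s * s"
  define h where "h = n div 2"
  define L where "L = s div 2 - 2"
  obtain q where q: "s = 4 * q" using assms(1) by blast
  have n: "n = 2 * h" "0 < n" and even_h: "even h" and L: "int s div 2 - 2 = int L"
    using assms(2) unfolding n_def h_def L_def q by auto
  have grid: "fm n (2 * of_int d / real n)
      = (if 1 \<le> d \<and> d \<le> int L then (if odd d then 1 else - 1) / real n else 0)" for d
    unfolding n_def L[symmetric] by (rule fm_even_grid[OF assms])
  have node: "node n k = 2 * of_int (int k - int h) / real n" for k
    using n by (simp add: node_def field_simps)
  have summand: "(-1)^k * fm n (node n k) / (1 / real n - node n k)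
      = (if k \<in> {h+1..h+L} then 1 / (2 * (real k - real h) - 1) else 0)" for k
  proof (cases "k \<in> {h+1..h+L}")
    case True
    define e where "e = k - h"
    have e: "k = e + h" "int k - int h = int e" "1 \<le> e" "e \<le> L" using True unfolding e_def by auto
    have "fm n (node n k) = (if odd (int e) then 1 else - 1) / real n"
      unfolding node e(2) grid using e(3,4) by simp
    moreover have "(-1::real)^k * (if odd (int e) then 1 else - 1) = -1"
      using even_h unfolding e(1) by (simp add: power_add minus_one_power_iff)
    ultimately have "(-1)^k * fm n (node n k) / (1 / real n - node n k)
        = - 1 / real n / ((1 - 2 * (real k - real h)) / real n)"
      unfolding reciprocal_minus_node[OF n] by (simp add: mult.assoc[symmetric])
    also have "\<dots> = 1 / (2 * (real k - real h) - 1)"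
      using n(2) one_minus_twice_diff_neq_zero[of k h] by (simp add: field_simps)
    finally show ?thesis using True by simp
  next
    case False
    then have "\<not> (1 \<le> int k - int h \<and> int k - int h \<le> int L)" by auto
    then have "fm n (node n k) = 0" unfolding node grid by auto
    then show ?thesis using False by simp
  qed
  have "h + L \<le> n" unfolding n_def h_def L_def q using le_square[of q] by linarith
  have "Nn n (fm n) (1 / real n) = (\<Sum>k\<in>{0..n} \<inter> {h+1..h+L}. 1 / (2 * (real k - real h) - 1))"
    unfolding Nn_def summand by (rule sum.inter_restrict[symmetric]) simp
  also have "{0..n} \<inter> {h+1..h+L} = {1+h..L+h}" using \<open>h + L \<le> n\<close> by auto
  also have "(\<Sum>k\<in>{1+h..L+h}. 1 / (2 * (real k - real h) - 1)) = (\<Sum>e=1..L. 1 / (2 * real e - 1))"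
    unfolding sum.shift_bounds_cl_nat_ivl by simp
  finally show ?thesis unfolding n_def L_def .
qed

lemma ln_le_sum_odd_reciprocals: "ln (real L + 1) / 2 \<le> (\<Sum>e=1..L. 1 / (2 * real e - 1))"
proof -
  have "ln (real L + 1) / 2 \<le> harm L / 2" using ln_le_harm[of L] by simp
  also have "\<dots> = (\<Sum>e=1..L. 1 / (2 * real e))"
    unfolding harm_def by (simp add: sum_divide_distrib inverse_eq_divide mult.commute)
  also have "\<dots> \<le> (\<Sum>e=1..L. 1 / (2 * real e - 1))"
    by (intro sum_mono) (simp add: frac_le)
  finally show ?thesis .
qed

lemma Bn_fm_reciprocal_lower_bound:
  assumes "4 dvd s" "8 \<le> s"
  defines "n \<equiv> s * s"
  shows "ln (real n) / (16 * real n) \<le> Bn n (fm n) (1 / real n)"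
proof -
  obtain q where q: "s = 4 * q" using assms(1) by blast
  have q2: "2 \<le> q" using assms(2) q by simp
  define L where "L = s div 2 - 2"
  have n: "0 < n" "n = 2 * (n div 2)" "4 dvd n" unfolding n_def q using q2 by auto
  have not_node: "\<not> (\<exists>k\<le>n. 1 / real n = node n k)"
  proof
    assume "\<exists>k\<le>n. 1 / real n = node n k"
    then obtain k where "1 / real n - node n k = 0" by auto
    then show False
      unfolding reciprocal_minus_node[OF n(2,1)] using one_minus_twice_diff_neq_zero n(1) by simp
  qed
  have N: "ln (real L + 1) / 2 \<le> Nn n (fm n) (1 / real n)"
    unfolding n_def L_def Nn_fm_reciprocal[OF assms(1,2)] by (rule ln_le_sum_odd_reciprocals)
  have D: "0 < Dn n (1 / real n)" "Dn n (1 / real n) \<le> 2 * real n"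
    using Dn_reciprocal_bounds[OF n(3,1)] by simp_all
  have "real s \<le> (real L + 1)^2"
  proof -
    have L: "real L + 1 = 2 * real q - 1" "2 \<le> real q" unfolding L_def q using q2 by auto
    have "0 \<le> real q * (real q - 2)" using L(2) by simp
    then show ?thesis unfolding L(1) q by (simp add: power2_eq_square algebra_simps)
  qed
  then have "ln (real n) \<le> 4 * ln (real L + 1)"
    unfolding n_def using assms(2) ln_mono[of "real s" "(real L + 1)^2"]
    by (simp add: ln_mult ln_realpow)
  then have "ln (real n) / (16 * real n) \<le> (ln (real L + 1) / 2) / (2 * real n)"
    using n(1) by (simp add: field_simps)
  also have "\<dots> \<le> Nn n (fm n) (1 / real n) / Dn n (1 / real n)"
    using N D n(1) by (intro frac_le) (auto intro: order_trans[rotated, OF N])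
  also have "\<dots> = Bn n (fm n) (1 / real n)"
    unfolding Bn_def by (simp only: if_not_P[OF not_node])
  finally show ?thesis .
qed

theorem lemma2:
  fixes j :: nat
  assumes "j \<ge> 100"
  defines "n \<equiv> (2::nat) ^ (2 ^ j)"
  shows "fm n (1 / real n) = 0 \<and> Bn n (fm n) (1 / real n) \<ge> ln (real n) / (16 * real n)"
proof -
  define s :: nat where "s = 2 ^ 2 ^ (j - 1)"
  have "(2::nat) ^ j = 2 * 2 ^ (j - 1)" using assms(1) by (simp flip: power_Suc)
  then have n: "n = s * s" unfolding n_def s_def by (simp only: mult_2 power_add)
  have "2 \<le> j - 1" using assms(1) by simp
  then have "(2::nat) ^ 2 \<le> 2 ^ (j - 1)" by (rule power_increasing) simp
  then have "(2::nat) ^ 2 ^ 2 dvd s" unfolding s_def by (rule le_imp_power_dvd)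
  then have s16: "16 dvd s" by simp
  then have "4 dvd s" by (rule dvd_trans[rotated]) simp
  moreover have "8 \<le> s" using dvd_imp_le[OF s16] unfolding s_def by simp
  ultimately have s: "4 dvd s" "8 \<le> s" .
  have "4 < sqrt (real n)" unfolding n using s(2) by simp
  then show ?thesis using fm_reciprocal Bn_fm_reciprocal_lower_bound[OF s, folded n] by blast
qed

end
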